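(* Let $f:\mathbb{R}^d\to\mathbb{R}$ be convex and $M$-Lipschitz with $X^*\neq\emptyset$. Run the Proximal Bundle Method with $\beta\in(0,1)$ and stepsizes $\rho_k=(f(x_k)-f^* )/D^2$, where $D^2>0$ is any number with $D^2\ge\sup\{\mathrm{dist}(x,X^* )^2: f(x)\le f(x_0)\}$. Then for any $0<\epsilon\le f(x_0)-f^*$, the number of descent steps taken before an $\epsilon$-minimizer is found is at most $$\left\lceil\frac{2\log\left(\frac{f(x_0)-f^*}{\epsilon}\right)}{\beta}\right\rceil,$$ and the number of null steps taken before then is at most $$\left(\frac{1}{1-(1-\beta/2)^2}\right)\frac{8M^2D^2}{(1-\beta)^2\epsilon^2}.$$
   Context: Throughout, $f:\mathbb{R}^d\to\mathbb{R}$ is a proper closed convex function attaining its minimum $f^*=\inf f$ on the nonempty set $X^*=\{x: f(x)=f^*\}$; $\mathrm{dist}(x,S)=\inf_{y\in S}\|x-y\|$; $\partial f(x)$ is the convex subdifferential. A subgradient oracle returns, for any $x$, the value $f(x)$ and some $g(x)\in\partial f(x)$. Proximal Bundle Method: fix $\beta\in(0,1)$, $x_0=z_0\in\mathbb{R}^d$, $g_0=g(x_0)$, and the initial model $f_0(x)=f(x_0)+\langle g_0,x-x_0\rangle$. At iteration $k\ge0$, given a convex model $f_k:\mathbb{R}^d\to\mathbb{R}$ and stepsize $\rho_k>0$, compute $z_{k+1}=\operatorname{argmin}_z f_k(z)+\frac{\rho_k}{2}\|z-x_k\|^2$. If $\beta(f(x_k)-f_k(z_{k+1}))\le f(x_k)-f(z_{k+1})$,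 iteration $k$ is a descent step and $x_{k+1}=z_{k+1}$; otherwise it is a null step and $x_{k+1}=x_k$. Then a new convex model $f_{k+1}$ and stepsize $\rho_{k+1}$ are chosen satisfying, with $g_{k+1}=g(z_{k+1})$ and $s_{k+1}=\rho_k(x_k-z_{k+1})$: (1) $f_{k+1}(x)\le f(x)$ for all $x$; (2) $f_{k+1}(x)\ge f(z_{k+1})+\langle g_{k+1},x-z_{k+1}\rangle$ for all $x$; (3) if iteration $k$ was a null step, $f_{k+1}(x)\ge f_k(z_{k+1})+\langle s_{k+1},x-z_{k+1}\rangle$ for all $x$; (4) if iteration $k$ was a null step, $\rho_{k+1}\ge\rho_k$. An $\epsilon$-minimizer is a point $x$ with $f(x)-f^*\le\epsilon$. *)

theory Defs
  imports "HOL-Analysis.Analysis"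
begin

definition fstar :: "('a \<Rightarrow> real) \<Rightarrow> real" where
  "fstar f = (INF x. f x)"

definition Xstar :: "('a \<Rightarrow> real) \<Rightarrow> 'a set" where
  "Xstar f = {x. f x = fstar f}"

definition is_subgradient :: "('a::real_inner \<Rightarrow> real) \<Rightarrow> 'a \<Rightarrow> 'a \<Rightarrow> bool" where
  "is_subgradient f x v \<longleftrightarrow> (\<forall>y. f y \<ge> f x + inner v (y - x))"

definition pbm_descent ::
  "('a \<Rightarrow> real) \<Rightarrow> real \<Rightarrow> (nat \<Rightarrow> 'a) \<Rightarrow> (nat \<Rightarrow> 'a) \<Rightarrow> (nat \<Rightarrow> 'a \<Rightarrow> real) \<Rightarrow> nat \<Rightarrow> bool" where
  "pbm_descent f \<beta> x z fm k \<longleftrightarrow>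
     \<beta> * (f (x k) - fm k (z (Suc k))) \<le> f (x k) - f (z (Suc k))"

definition pbm_step ::
  "('a::euclidean_space \<Rightarrow> real) \<Rightarrow> ('a \<Rightarrow> 'a) \<Rightarrow> real \<Rightarrow> (nat \<Rightarrow> 'a) \<Rightarrow> (nat \<Rightarrow> 'a) \<Rightarrow>
    (nat \<Rightarrow> 'a \<Rightarrow> real) \<Rightarrow> (nat \<Rightarrow> real) \<Rightarrow> nat \<Rightarrow> bool" where
  "pbm_step f g \<beta> x z fm \<rho> k \<longleftrightarrow>
     \<rho> k > 0 \<and>
     convex_on UNIV (fm k) \<and>
     (\<forall>w. fm k (z (Suc k)) + \<rho> k / 2 * (norm (z (Suc k) - x k))\<^sup>2
            \<le> fm k w + \<rho> k / 2 * (norm (w - x k))\<^sup>2) \<and>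
     x (Suc k) = (if pbm_descent f \<beta> x z fm k then z (Suc k) else x k) \<and>
     convex_on UNIV (fm (Suc k)) \<and>
     (\<forall>w. fm (Suc k) w \<le> f w) \<and>
     (\<forall>w. fm (Suc k) w \<ge> f (z (Suc k)) + inner (g (z (Suc k))) (w - z (Suc k))) \<and>
     (\<not> pbm_descent f \<beta> x z fm k \<longrightarrow>
        (\<forall>w. fm (Suc k) w \<ge> fm k (z (Suc k))
              + inner (\<rho> k *\<^sub>R (x k - z (Suc k))) (w - z (Suc k)))) \<and>
     (\<not> pbm_descent f \<beta> x z fm k \<longrightarrow> \<rho> (Suc k) \<ge> \<rho> k)"

end

theory Submission
  imports Defs
begin

text \<open>Write \<open>\<Delta>\<^sub>k = f(x\<^sub>k) - f\<^sup>*\<close> and let \<open>G\<^sub>k\<close> be the gap between \<open>f(x\<^sub>k)\<close> and the optimal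
  value of the proximal subproblem. Testing the subproblem at a nearest minimizer and using
  \<open>\<rho>\<^sub>k D\<^sup>2 = \<Delta>\<^sub>k\<close> gives \<open>G\<^sub>k \<ge> \<Delta>\<^sub>k / 2\<close>, so every descent step multiplies \<open>\<Delta>\<close> by at most
  \<open>1 - \<beta>/2\<close>. A null step keeps \<open>x\<^sub>k\<close> and \<open>\<rho>\<^sub>k\<close>, and the two new cuts raise the optimal value of
  the subproblem by at least \<open>(1-\<beta>)\<^sup>2 \<rho>\<^sub>k G\<^sub>k\<^sup>2 / (4M\<^sup>2)\<close>, so \<open>1/G\<^sub>k\<close> grows by
  \<open>(1-\<beta>)\<^sup>2 \<rho>\<^sub>k / (4M\<^sup>2)\<close>. Hence the potential \<open>C / (2 \<Delta>\<^sub>k G\<^sub>k)\<close> with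
  \<open>C = 8M\<^sup>2D\<^sup>2/(1-\<beta>)\<^sup>2\<close> increases by one per null step and loses at most \<open>C / \<Delta>\<^sub>k\<^sup>2\<close> per
  descent step; the losses form a geometric series dominated by its last term.\<close>

lemma subgradient_norm_le_lipschitz:
  fixes f :: "'a::real_inner \<Rightarrow> real"
  assumes lip: "M-lipschitz_on UNIV f" and sg: "is_subgradient f y v"
  shows "norm v \<le> M"
proof -
  have "(norm v)\<^sup>2 \<le> f (y + v) - f y"
    using sg[unfolded is_subgradient_def, rule_format, of "y + v"] by (simp add: power2_norm_eq_inner)
  also have "\<dots> \<le> M * norm v"
    using lipschitz_onD[OF lip, of "y + v" y] by (simp add: dist_norm dist_real_def)
  finally have "norm v * norm v \<le> M * norm v" by (simp add: power2_eq_square)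
  then show ?thesis
    using lipschitz_on_nonneg[OF lip] by (cases "norm v = 0") auto
qed

lemma Xstar_nearest_point:
  fixes f :: "'a::heine_borel \<Rightarrow> real"
  assumes "continuous_on UNIV f" "Xstar f \<noteq> {}"
  obtains p where "f p = fstar f" "dist y p = infdist y (Xstar f)"
proof -
  have "closed (Xstar f)"
    using continuous_closed_preimage_constant[OF assms(1) closed_UNIV] by (simp add: Xstar_def)
  then obtain p where "p \<in> Xstar f" "infdist y (Xstar f) = dist y p"
    using infdist_attains_inf assms(2) by blast
  then show ?thesis using that by (simp add: Xstar_def)
qed

lemma half_norm_sq_plus_inner_ge:
  fixes u v :: "'a::real_inner"
  assumes "r > 0"
  shows "- ((norm v)\<^sup>2 / (2 * r)) \<le> r / 2 * (norm u)\<^sup>2 + inner v u"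
proof -
  have "0 \<le> (norm (r *\<^sub>R u + v))\<^sup>2 / (2 * r)" using assms by simp
  also have "\<dots> = r / 2 * (norm u)\<^sup>2 + inner v u + (norm v)\<^sup>2 / (2 * r)"
    using assms unfolding power2_norm_eq_inner
    by (simp add: inner_add_left inner_add_right inner_commute field_simps)
  finally show ?thesis by simp
qed

lemma norm_diff_square_le:
  fixes a b :: "'a::real_normed_vector"
  shows "(norm (a - b))\<^sup>2 \<le> 2 * (norm a)\<^sup>2 + 2 * (norm b)\<^sup>2"
proof -
  have "(norm (a - b))\<^sup>2 \<le> (norm a + norm b)\<^sup>2"
    by (intro power_mono norm_triangle_ineq4) simp
  also have "\<dots> \<le> 2 * (norm a)\<^sup>2 + 2 * (norm b)\<^sup>2"
    using sum_squares_bound[of "norm a" "norm b"] by (simp add: power2_sum)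
  finally show ?thesis .
qed

lemma ge_of_concave_quadratic_family:
  fixes a d V r :: real
  assumes "r > 0" "V > 0" "0 \<le> d" "r * d \<le> V"
    and family: "\<And>\<theta>. 0 \<le> \<theta> \<Longrightarrow> \<theta> \<le> 1 \<Longrightarrow> \<theta> * d - \<theta>\<^sup>2 * V / (2 * r) \<le> a"
  shows "r * d\<^sup>2 / (2 * V) \<le> a"
proof -
  define \<theta> where "\<theta> = r * d / V"
  have "r * d\<^sup>2 / (2 * V) = \<theta> * d - \<theta>\<^sup>2 * V / (2 * r)"
    using assms by (simp add: \<theta>_def field_simps power2_eq_square)
  also have "\<dots> \<le> a"
    using assms by (intro family) (auto simp: \<theta>_def)
  finally show ?thesis .
qed

text \<open>In the application \<open>q = r/2 \<parallel>z - x\<parallel>\<^sup>2\<close>, and \<open>2 M\<^sup>2 + 4 r q\<close> bounds the squared norm of the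
  difference between the new subgradient and the aggregate subgradient \<open>r (x - z)\<close>.\<close>

lemma null_step_scalar_bound:
  fixes a \<delta> G M q r \<beta> :: real
  assumes r: "r > 0" and M: "M > 0" and \<beta>: "0 \<le> \<beta>" "\<beta> \<le> 1"
    and G: "0 \<le> G" "2 * r * G \<le> M\<^sup>2" and q: "0 \<le> q"
    and \<delta>: "(1 - \<beta>) * (G + q) \<le> \<delta>"
    and family: "\<And>\<theta>. 0 \<le> \<theta> \<Longrightarrow> \<theta> \<le> 1 \<Longrightarrow>
                   \<theta> * \<delta> - \<theta>\<^sup>2 * (2 * M\<^sup>2 + 4 * r * q) / (2 * r) \<le> a"
  shows "(1 - \<beta>)\<^sup>2 * r * G\<^sup>2 / (4 * M\<^sup>2) \<le> a"
proof -
  define d where "d = (1 - \<beta>) * (G + q)"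
  define V where "V = 2 * M\<^sup>2 + 4 * r * q"
  have V: "V > 0" using M r q by (simp add: V_def add_pos_nonneg)
  have d: "0 \<le> d" using \<beta> G q by (simp add: d_def)
  have "r * d \<le> r * (G + q)"
    using r G q \<beta> by (simp add: d_def mult_left_le_one_le)
  also have "\<dots> \<le> V"
  proof -
    have "2 * (r * G) \<le> M\<^sup>2" "0 \<le> r * q" using G r q by (simp_all add: algebra_simps)
    moreover have "r * (G + q) = r * G + r * q" "4 * r * q = 4 * (r * q)" "0 \<le> M\<^sup>2"
      by (simp_all add: ring_distribs)
    ultimately show ?thesis unfolding V_def by linarith
  qed
  finally have "r * d \<le> V" .
  have "r * d\<^sup>2 / (2 * V) \<le> a"
  proof (rule ge_of_concave_quadratic_family[OF r V d \<open>r * d \<le> V\<close>])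
    fix \<theta> :: real assume "0 \<le> \<theta>" "\<theta> \<le> 1"
    then have "\<theta> * d \<le> \<theta> * \<delta>" using \<delta> by (simp add: d_def mult_left_mono)
    then show "\<theta> * d - \<theta>\<^sup>2 * V / (2 * r) \<le> a"
      using family[OF \<open>0 \<le> \<theta>\<close> \<open>\<theta> \<le> 1\<close>] by (simp add: V_def)
  qed
  moreover have "(1 - \<beta>)\<^sup>2 * r * G\<^sup>2 / (4 * M\<^sup>2) \<le> r * d\<^sup>2 / (2 * V)"
  proof -
    have "8 * r * q * G\<^sup>2 = 4 * q * G * (2 * r * G)" by (simp add: power2_eq_square)
    also have "\<dots> \<le> 4 * q * G * M\<^sup>2" using G q by (intro mult_left_mono) auto
    also have "\<dots> \<le> 4 * M\<^sup>2 * (2 * G * q + q\<^sup>2)" using G q by (simp add: algebra_simps)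
    finally have "G\<^sup>2 * (2 * V) \<le> 4 * M\<^sup>2 * (G + q)\<^sup>2"
      by (simp add: V_def power2_sum algebra_simps)
    then have "(1 - \<beta>)\<^sup>2 * r * (G\<^sup>2 * (2 * V)) \<le> (1 - \<beta>)\<^sup>2 * r * (4 * M\<^sup>2 * (G + q)\<^sup>2)"
      using r by (intro mult_left_mono) auto
    moreover have "d\<^sup>2 = (1 - \<beta>)\<^sup>2 * (G + q)\<^sup>2" by (simp add: d_def power_mult_distrib)
    ultimately show ?thesis using M V by (simp add: field_simps)
  qed
  ultimately show ?thesis by linarith
qed

lemma inverse_increase_of_quadratic_decrease:
  fixes G G' c :: real
  assumes "0 < G'" "0 \<le> c" "c * G\<^sup>2 \<le> G - G'"
  shows "1 / G + c \<le> 1 / G'"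
proof -
  have "0 \<le> c * G\<^sup>2" using assms by simp
  then have "G' \<le> G" "0 < G" using assms by linarith+
  have "c \<le> c * G / G'" using assms \<open>G' \<le> G\<close> by (simp add: field_simps mult_right_mono)
  also have "\<dots> = c * G\<^sup>2 / (G * G')" using \<open>0 < G\<close> by (simp add: power2_eq_square)
  also have "\<dots> \<le> (G - G') / (G * G')" using assms \<open>0 < G\<close> by (intro divide_right_mono) auto
  also have "\<dots> = 1 / G' - 1 / G" using assms \<open>0 < G\<close> by (simp add: field_simps)
  finally show ?thesis by simp
qed

lemma exponent_lt_of_geometric_gt:
  fixes b e D :: real
  assumes e: "0 < e" and lt: "e < (1 - b / 2) ^ n * D" and b: "0 < b" "b < 2"
  shows "real n < 2 * ln (D / e) / b"
proof -
  have q: "0 < 1 - b / 2" using b by simp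
  then have D: "0 < D" using e lt by (smt (verit) zero_less_mult_pos zero_less_power)
  have "ln e < ln ((1 - b / 2) ^ n * D)" using e lt q D by simp
  also have "\<dots> = real n * ln (1 - b / 2) + ln D" using q D by (simp add: ln_mult_pos ln_realpow)
  also have "real n * ln (1 - b / 2) \<le> real n * (- b / 2)"
    using ln_le_minus_one[OF q] by (intro mult_left_mono) auto
  finally have "real n * (b / 2) < ln (D / e)" using D e by (simp add: ln_div)
  then show ?thesis using b by (simp add: field_simps)
qed

lemma sum_Collect_less_Suc:
  "(\<Sum>j | j < Suc k \<and> P j. F j) = (\<Sum>j | j < k \<and> P j. F j) + (if P k then F k else 0)"
proof (cases "P k")
  case True
  then have "{j. j < Suc k \<and> P j} = insert k {j. j < k \<and> P j}" by (auto simp: less_Suc_eq)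
  then show ?thesis using True by (simp add: add.commute)
next
  case False
  then have "{j. j < Suc k \<and> P j} = {j. j < k \<and> P j}" by (auto simp: less_Suc_eq)
  then show ?thesis using False by simp
qed

lemma card_Collect_less_Suc:
  "card {j. j < Suc k \<and> P j} = card {j. j < k \<and> P j} + (if P k then 1 else 0)"
  using sum_Collect_less_Suc[where F = "\<lambda>_. 1 :: nat" and k = k and P = P] by simp

lemma card_Collect_less_split:
  "card {j. j < k \<and> P j} + card {j. j < k \<and> \<not> P j} = k"
  by (induction k) (simp_all add: card_Collect_less_Suc)

locale pbm_run =
  fixes f :: "'a::euclidean_space \<Rightarrow> real" and g :: "'a \<Rightarrow> 'a"
    and M \<beta> D2 :: real and x z :: "nat \<Rightarrow> 'a" and fm :: "nat \<Rightarrow> 'a \<Rightarrow> real"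
    and \<rho> :: "nat \<Rightarrow> real"
  assumes lipschitz: "M-lipschitz_on UNIV f"
    and Xstar_nonempty: "Xstar f \<noteq> {}"
    and subgrad_oracle: "\<forall>y. is_subgradient f y (g y)"
    and beta: "0 < \<beta>" "\<beta> < 1"
    and D2_pos: "D2 > 0"
    and D2_bound: "\<forall>y. f y \<le> f (x 0) \<longrightarrow> (infdist y (Xstar f))\<^sup>2 \<le> D2"
    and init_model: "fm 0 = (\<lambda>w. f (x 0) + inner (g (x 0)) (w - x 0))"
    and stepsize: "\<forall>k. \<rho> k = (f (x k) - fstar f) / D2"
    and run: "\<forall>k. f (x k) > fstar f \<longrightarrow> pbm_step f g \<beta> x z fm \<rho> k"
begin

abbreviation \<Delta> :: "nat \<Rightarrow> real" where
  "\<Delta> k \<equiv> f (x k) - fstar f"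

abbreviation unsolved_upto :: "nat \<Rightarrow> bool" where
  "unsolved_upto k \<equiv> \<forall>j\<le>k. 0 < \<Delta> j"

abbreviation descent :: "nat \<Rightarrow> bool" where
  "descent k \<equiv> pbm_descent f \<beta> x z fm k"

abbreviation prox_val :: "nat \<Rightarrow> real" where
  "prox_val k \<equiv> fm k (z (Suc k)) + \<rho> k / 2 * (norm (z (Suc k) - x k))\<^sup>2"

abbreviation prox_gap :: "nat \<Rightarrow> real" where
  "prox_gap k \<equiv> f (x k) - prox_val k"

lemma subgradient_ineq: "f y + inner (g y) (w - y) \<le> f w"
  using subgrad_oracle unfolding is_subgradient_def by blast

lemma oracle_norm_le: "norm (g y) \<le> M"
  using subgradient_norm_le_lipschitz lipschitz subgrad_oracle by blast

lemma nearest_minimizer: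
  obtains p where "f p = fstar f" "dist y p = infdist y (Xstar f)"
  using Xstar_nearest_point[OF lipschitz_on_continuous_on[OF lipschitz] Xstar_nonempty] by blast

lemma M_pos:
  assumes "0 < \<Delta> 0"
  shows "0 < M"
proof -
  obtain p where "f p = fstar f" using nearest_minimizer by blast
  then have "0 < dist (f (x 0)) (f p)" using assms by (simp add: dist_real_def)
  also have "\<dots> \<le> M * dist (x 0) p" using lipschitz_onD[OF lipschitz] by blast
  finally show ?thesis using lipschitz_on_nonneg[OF lipschitz] by (simp add: zero_less_mult_iff)
qed

lemma rho_eq: "\<rho> k = \<Delta> k / D2"
  using stepsize by blast

lemma rho_pos: "0 < \<Delta> k \<Longrightarrow> 0 < \<rho> k"
  using rho_eq D2_pos by simp

lemma pbm_step_at: "0 < \<Delta> k \<Longrightarrow> pbm_step f g \<beta> x z fm \<rho> k"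
  using run by simp

lemma model_le: "unsolved_upto k \<Longrightarrow> fm k w \<le> f w"
proof (cases k)
  case 0
  then show ?thesis using init_model subgradient_ineq by simp
next
  case (Suc j)
  moreover assume "unsolved_upto k"
  ultimately show ?thesis using pbm_step_at[of j] unfolding pbm_step_def by simp
qed

lemma prox_val_le: "0 < \<Delta> k \<Longrightarrow> prox_val k \<le> fm k w + \<rho> k / 2 * (norm (w - x k))\<^sup>2"
  using pbm_step_at[of k] unfolding pbm_step_def by blast

lemma null_step_keeps_center:
  assumes "0 < \<Delta> k" "\<not> descent k"
  shows "x (Suc k) = x k" "\<rho> (Suc k) = \<rho> k"
proof -
  show "x (Suc k) = x k" using pbm_step_at[OF assms(1)] assms(2) unfolding pbm_step_def by simp
  then show "\<rho> (Suc k) = \<rho> k" using rho_eq[of k] rho_eq[of "Suc k"] by simp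
qed

lemma descent_step_center: "0 < \<Delta> k \<Longrightarrow> descent k \<Longrightarrow> x (Suc k) = z (Suc k)"
  using pbm_step_at unfolding pbm_step_def by simp

lemma prox_gap_ge_half:
  assumes "unsolved_upto k" "f (x k) \<le> f (x 0)"
  shows "\<Delta> k / 2 \<le> prox_gap k"
proof -
  obtain p where p: "f p = fstar f" "dist (x k) p = infdist (x k) (Xstar f)"
    using nearest_minimizer by blast
  have "(norm (p - x k))\<^sup>2 \<le> D2"
    using D2_bound assms(2) p by (simp add: dist_norm norm_minus_commute)
  moreover have "0 < \<rho> k" using rho_pos assms(1) by simp
  ultimately have "\<rho> k / 2 * (norm (p - x k))\<^sup>2 \<le> \<rho> k / 2 * D2"
    by (intro mult_left_mono) auto
  moreover have "prox_val k \<le> fm k p + \<rho> k / 2 * (norm (p - x k))\<^sup>2"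
    using prox_val_le assms(1) by simp
  moreover have "fm k p \<le> fstar f" using model_le[OF assms(1), of p] p(1) by linarith
  moreover have "\<rho> k / 2 * D2 = \<Delta> k / 2" using rho_eq D2_pos by simp
  ultimately show ?thesis by (simp add: field_simps)
qed

lemma descent_step_contracts:
  assumes "unsolved_upto k" "f (x k) \<le> f (x 0)" "descent k"
  shows "\<Delta> (Suc k) \<le> (1 - \<beta> / 2) * \<Delta> k"
proof -
  have "0 \<le> \<rho> k / 2 * (norm (z (Suc k) - x k))\<^sup>2" using rho_pos[of k] assms(1) by simp
  then have "\<Delta> k / 2 \<le> f (x k) - fm k (z (Suc k))"
    using prox_gap_ge_half[OF assms(1,2)] by simp
  then have "\<beta> * (\<Delta> k / 2) \<le> \<beta> * (f (x k) - fm k (z (Suc k)))"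
    using beta by (intro mult_left_mono) auto
  also have "\<dots> \<le> f (x k) - f (x (Suc k))"
    using assms(3) descent_step_center assms(1) unfolding pbm_descent_def by simp
  finally show ?thesis by (simp add: field_simps)
qed

lemma iterate_in_level_set: "unsolved_upto k \<Longrightarrow> f (x k) \<le> f (x 0)"
proof (induction k)
  case (Suc k)
  then have IH: "f (x k) \<le> f (x 0)" by simp
  show ?case
  proof (cases "descent k")
    case True
    have "\<Delta> (Suc k) \<le> (1 - \<beta> / 2) * \<Delta> k"
      using descent_step_contracts[OF _ IH True] Suc.prems by simp
    also have "\<dots> \<le> \<Delta> k" using beta Suc.prems[rule_format, of k] by (simp add: algebra_simps)
    finally show ?thesis using IH by simp
  next
    case False
    then show ?thesis using null_step_keeps_center IH Suc.prems by simp
  qed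
qed simp

lemma prox_gap_pos:
  assumes "unsolved_upto k"
  shows "0 < prox_gap k"
  using prox_gap_ge_half[OF assms iterate_in_level_set[OF assms]] assms by force

lemma prox_gap_le_lipschitz_of_cut_at_center:
  assumes "0 < \<Delta> k" "\<forall>w. f (x k) + inner (g (x k)) (w - x k) \<le> fm k w"
  shows "2 * \<rho> k * prox_gap k \<le> M\<^sup>2"
proof -
  define u where "u = z (Suc k) - x k"
  have r: "0 < \<rho> k" using rho_pos assms(1) by simp
  have "- (M\<^sup>2 / (2 * \<rho> k)) \<le> - ((norm (g (x k)))\<^sup>2 / (2 * \<rho> k))"
    using oracle_norm_le r by (simp add: divide_right_mono power_mono)
  also have "\<dots> \<le> \<rho> k / 2 * (norm u)\<^sup>2 + inner (g (x k)) u"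
    using half_norm_sq_plus_inner_ge[OF r] .
  also have "\<dots> \<le> prox_val k - f (x k)"
    using assms(2)[rule_format, of "z (Suc k)"] unfolding u_def by linarith
  finally show ?thesis using r by (simp add: field_simps)
qed

lemma null_step_prox_val_increase:
  assumes "0 < \<Delta> k" "\<not> descent k"
  defines "u \<equiv> z (Suc (Suc k)) - z (Suc k)"
    and "s \<equiv> \<rho> k *\<^sub>R (x k - z (Suc k))"
  shows "\<rho> k / 2 * (norm u)\<^sup>2 \<le> prox_val (Suc k) - prox_val k"
    and "f (z (Suc k)) - fm k (z (Suc k)) + inner (g (z (Suc k)) - s) u + \<rho> k / 2 * (norm u)\<^sup>2
           \<le> prox_val (Suc k) - prox_val k"
proof -
  have st: "pbm_step f g \<beta> x z fm \<rho> k" using pbm_step_at assms(1) .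
  define w where "w = z (Suc k) - x k"
  have "z (Suc (Suc k)) - x k = u + w" by (simp add: u_def w_def)
  then have "(norm (z (Suc (Suc k)) - x k))\<^sup>2 = (norm u)\<^sup>2 + 2 * inner u w + (norm w)\<^sup>2"
    using dot_norm[of u w] by (simp add: field_simps)
  then have "\<rho> k / 2 * (norm (z (Suc (Suc k)) - x k))\<^sup>2
      = \<rho> k / 2 * (norm u)\<^sup>2 + \<rho> k * inner u w + \<rho> k / 2 * (norm w)\<^sup>2"
    by (simp add: algebra_simps)
  moreover have "\<rho> k * inner u w = - inner s u"
    unfolding s_def w_def by (simp add: inner_commute inner_diff_right algebra_simps)
  ultimately have increase: "prox_val (Suc k) - prox_val k
      = fm (Suc k) (z (Suc (Suc k))) - fm k (z (Suc k)) - inner s u + \<rho> k / 2 * (norm u)\<^sup>2"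
    using null_step_keeps_center[OF assms(1,2)] by (simp add: w_def field_simps)
  have "fm k (z (Suc k)) + inner s u \<le> fm (Suc k) (z (Suc (Suc k)))"
    using st assms(2) unfolding pbm_step_def u_def s_def by simp
  then show "\<rho> k / 2 * (norm u)\<^sup>2 \<le> prox_val (Suc k) - prox_val k"
    using increase by linarith
  have "f (z (Suc k)) + inner (g (z (Suc k))) u \<le> fm (Suc k) (z (Suc (Suc k)))"
    using st unfolding pbm_step_def u_def by simp
  then show "f (z (Suc k)) - fm k (z (Suc k)) + inner (g (z (Suc k)) - s) u + \<rho> k / 2 * (norm u)\<^sup>2
           \<le> prox_val (Suc k) - prox_val k"
    using increase by (simp add: inner_diff_left)
qed

lemma null_step_prox_val_increase_convex_comb:
  assumes "0 < \<Delta> k" "\<not> descent k" "0 \<le> \<theta>" "\<theta> \<le> 1"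
  defines "v \<equiv> g (z (Suc k)) - \<rho> k *\<^sub>R (x k - z (Suc k))"
  shows "\<theta> * (f (z (Suc k)) - fm k (z (Suc k))) - \<theta>\<^sup>2 * (norm v)\<^sup>2 / (2 * \<rho> k)
           \<le> prox_val (Suc k) - prox_val k"
proof -
  define u where "u = z (Suc (Suc k)) - z (Suc k)"
  define \<delta> where "\<delta> = f (z (Suc k)) - fm k (z (Suc k))"
  define a where "a = prox_val (Suc k) - prox_val k"
  define A where "A = \<rho> k / 2 * (norm u)\<^sup>2"
  have r: "0 < \<rho> k" using rho_pos assms(1) by simp
  note increase = null_step_prox_val_increase[OF assms(1,2)]
  have "(1 - \<theta>) * A \<le> (1 - \<theta>) * a"
    using increase(1) assms(4) unfolding u_def a_def A_def by (intro mult_left_mono) auto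
  moreover have "\<theta> * (\<delta> + inner v u + A) \<le> \<theta> * a"
    using increase(2) assms(3) unfolding u_def a_def v_def \<delta>_def A_def by (intro mult_left_mono) auto
  moreover have "- (\<theta>\<^sup>2 * (norm v)\<^sup>2 / (2 * \<rho> k)) \<le> A + \<theta> * inner v u"
    using half_norm_sq_plus_inner_ge[OF r, where u = u and v = "\<theta> *\<^sub>R v"] unfolding A_def
    by (simp add: power_mult_distrib)
  moreover have "(1 - \<theta>) * A + \<theta> * (\<delta> + inner v u + A) = A + \<theta> * \<delta> + \<theta> * inner v u"
    "(1 - \<theta>) * a + \<theta> * a = a" by (simp_all add: algebra_simps)
  ultimately have "\<theta> * \<delta> - \<theta>\<^sup>2 * (norm v)\<^sup>2 / (2 * \<rho> k) \<le> a" by linarith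
  then show ?thesis unfolding \<delta>_def a_def .
qed

lemma prox_gap_le_lipschitz: "unsolved_upto k \<Longrightarrow> 2 * \<rho> k * prox_gap k \<le> M\<^sup>2"
proof (induction k)
  case 0
  have "\<forall>w. f (x 0) + inner (g (x 0)) (w - x 0) \<le> fm 0 w" using init_model by simp
  then show ?case using prox_gap_le_lipschitz_of_cut_at_center 0 by simp
next
  case (Suc k)
  then have k: "0 < \<Delta> k" by simp
  show ?case
  proof (cases "descent k")
    case True
    have "\<forall>w. f (x (Suc k)) + inner (g (x (Suc k))) (w - x (Suc k)) \<le> fm (Suc k) w"
      using pbm_step_at[OF k] descent_step_center[OF k True] unfolding pbm_step_def by simp
    then show ?thesis using prox_gap_le_lipschitz_of_cut_at_center Suc.prems by simp
  next
    case False
    have "0 \<le> \<rho> k / 2 * (norm (z (Suc (Suc k)) - z (Suc k)))\<^sup>2" using rho_pos[OF k] by simp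
    then have "prox_gap (Suc k) \<le> prox_gap k"
      using null_step_prox_val_increase(1)[OF k False] null_step_keeps_center[OF k False] by simp
    then have "2 * \<rho> k * prox_gap (Suc k) \<le> 2 * \<rho> k * prox_gap k"
      using rho_pos[OF k] by (intro mult_left_mono) auto
    then show ?thesis using Suc null_step_keeps_center[OF k False] by simp
  qed
qed

lemma null_step_prox_val_increase_quadratic:
  assumes "unsolved_upto k" "\<not> descent k"
  shows "(1 - \<beta>)\<^sup>2 * \<rho> k * (prox_gap k)\<^sup>2 / (4 * M\<^sup>2) \<le> prox_val (Suc k) - prox_val k"
proof -
  have k: "0 < \<Delta> k" and M: "0 < M" using assms(1) M_pos by auto
  have r: "0 < \<rho> k" using rho_pos[OF k] .
  define q where "q = \<rho> k / 2 * (norm (z (Suc k) - x k))\<^sup>2"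
  define v where "v = g (z (Suc k)) - \<rho> k *\<^sub>R (x k - z (Suc k))"
  have "(norm v)\<^sup>2 \<le> 2 * (norm (g (z (Suc k))))\<^sup>2 + 2 * (norm (\<rho> k *\<^sub>R (x k - z (Suc k))))\<^sup>2"
    unfolding v_def by (rule norm_diff_square_le)
  also have "\<dots> \<le> 2 * M\<^sup>2 + 4 * \<rho> k * q"
  proof -
    have "(norm (g (z (Suc k))))\<^sup>2 \<le> M\<^sup>2" using oracle_norm_le by (intro power_mono) auto
    moreover have "(norm (\<rho> k *\<^sub>R (x k - z (Suc k))))\<^sup>2 = 2 * \<rho> k * q"
      using r by (simp add: q_def power_mult_distrib norm_minus_commute power2_eq_square)
    ultimately show ?thesis by simp
  qed
  finally have v: "(norm v)\<^sup>2 \<le> 2 * M\<^sup>2 + 4 * \<rho> k * q" .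
  show ?thesis
  proof (rule null_step_scalar_bound[OF r M])
    show "0 \<le> \<beta>" "\<beta> \<le> 1" using beta by auto
    show "0 \<le> prox_gap k" using prox_gap_pos[OF assms(1)] by simp
    show "2 * \<rho> k * prox_gap k \<le> M\<^sup>2" using prox_gap_le_lipschitz[OF assms(1)] .
    show "0 \<le> q" using r by (simp add: q_def)
    show "(1 - \<beta>) * (prox_gap k + q) \<le> f (z (Suc k)) - fm k (z (Suc k))"
      using assms(2) unfolding pbm_descent_def q_def by (simp add: algebra_simps)
    fix \<theta> :: real
    assume \<theta>: "0 \<le> \<theta>" "\<theta> \<le> 1"
    have "\<theta>\<^sup>2 * (norm v)\<^sup>2 / (2 * \<rho> k) \<le> \<theta>\<^sup>2 * (2 * M\<^sup>2 + 4 * \<rho> k * q) / (2 * \<rho> k)"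
      using v r by (intro divide_right_mono mult_left_mono) auto
    then show "\<theta> * (f (z (Suc k)) - fm k (z (Suc k)))
        - \<theta>\<^sup>2 * (2 * M\<^sup>2 + 4 * \<rho> k * q) / (2 * \<rho> k) \<le> prox_val (Suc k) - prox_val k"
      using null_step_prox_val_increase_convex_comb[OF k assms(2) \<theta>] unfolding v_def by linarith
  qed
qed

lemma null_step_inverse_gap_increase:
  assumes "unsolved_upto (Suc k)" "\<not> descent k"
  shows "1 / prox_gap k + (1 - \<beta>)\<^sup>2 * \<rho> k / (4 * M\<^sup>2) \<le> 1 / prox_gap (Suc k)"
proof (rule inverse_increase_of_quadratic_decrease)
  have k: "unsolved_upto k" using assms(1) by simp
  show "0 < prox_gap (Suc k)" using prox_gap_pos[OF assms(1)] .
  show "0 \<le> (1 - \<beta>)\<^sup>2 * \<rho> k / (4 * M\<^sup>2)" using rho_pos[of k] k by simp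
  show "(1 - \<beta>)\<^sup>2 * \<rho> k / (4 * M\<^sup>2) * (prox_gap k)\<^sup>2 \<le> prox_gap k - prox_gap (Suc k)"
    using null_step_prox_val_increase_quadratic[OF k assms(2)] null_step_keeps_center(1)[OF _ assms(2)] k
    by simp
qed

definition n_desc :: "nat \<Rightarrow> nat" where
  "n_desc k = card {j. j < k \<and> descent j}"

definition n_null :: "nat \<Rightarrow> nat" where
  "n_null k = card {j. j < k \<and> \<not> descent j}"

definition inv_sq_descent_sum :: "nat \<Rightarrow> real" where
  "inv_sq_descent_sum k = (\<Sum>j | j < k \<and> descent j. 1 / (\<Delta> j)\<^sup>2)"

definition contraction :: real where
  "contraction = 1 - \<beta> / 2"

definition null_coeff :: real where
  "null_coeff = 8 * M\<^sup>2 * D2 / (1 - \<beta>)\<^sup>2"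

definition potential :: "nat \<Rightarrow> real" where
  "potential k = null_coeff / (2 * \<Delta> k * prox_gap k)"

lemma n_desc_Suc: "n_desc (Suc k) = n_desc k + (if descent k then 1 else 0)"
  by (simp add: n_desc_def card_Collect_less_Suc)

lemma n_null_Suc: "n_null (Suc k) = n_null k + (if descent k then 0 else 1)"
  by (simp add: n_null_def card_Collect_less_Suc)

lemma inv_sq_descent_sum_Suc:
  "inv_sq_descent_sum (Suc k) = inv_sq_descent_sum k + (if descent k then 1 / (\<Delta> k)\<^sup>2 else 0)"
  by (simp add: inv_sq_descent_sum_def sum_Collect_less_Suc)

lemma contraction_bounds: "0 < contraction" "contraction < 1"
  using beta by (auto simp: contraction_def)

lemma one_minus_contraction_sq_bounds: "0 < 1 - contraction\<^sup>2" "1 - contraction\<^sup>2 \<le> 1"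
  using contraction_bounds by (auto simp: power_less_one_iff)

lemma null_coeff_nonneg: "0 \<le> null_coeff"
  using D2_pos by (simp add: null_coeff_def)

lemma \<Delta>_le_geometric: "unsolved_upto k \<Longrightarrow> \<Delta> k \<le> contraction ^ n_desc k * \<Delta> 0"
proof (induction k)
  case (Suc k)
  then have k: "unsolved_upto k" and IH: "\<Delta> k \<le> contraction ^ n_desc k * \<Delta> 0" by simp_all
  show ?case
  proof (cases "descent k")
    case True
    have "\<Delta> (Suc k) \<le> contraction * \<Delta> k"
      using descent_step_contracts[OF k iterate_in_level_set[OF k] True] by (simp add: contraction_def)
    also have "\<dots> \<le> contraction * (contraction ^ n_desc k * \<Delta> 0)"
      using IH contraction_bounds by (intro mult_left_mono) auto
    finally show ?thesis using True by (simp add: n_desc_Suc)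
  next
    case False
    then show ?thesis using IH null_step_keeps_center k by (simp add: n_desc_Suc)
  qed
qed (simp add: n_desc_def)

lemma inv_sq_descent_sum_bound:
  "unsolved_upto k \<Longrightarrow>
     inv_sq_descent_sum k + 1 / (\<Delta> k)\<^sup>2 \<le> 1 / ((1 - contraction\<^sup>2) * (\<Delta> k)\<^sup>2)"
proof (induction k)
  case 0
  then show ?case
    using one_minus_contraction_sq_bounds by (simp add: inv_sq_descent_sum_def divide_le_eq)
next
  case (Suc k)
  then have k: "unsolved_upto k" and pos: "0 < \<Delta> k" "0 < \<Delta> (Suc k)"
    and IH: "inv_sq_descent_sum k + 1 / (\<Delta> k)\<^sup>2 \<le> 1 / ((1 - contraction\<^sup>2) * (\<Delta> k)\<^sup>2)"
    by simp_all
  show ?case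
  proof (cases "descent k")
    case True
    have "\<Delta> (Suc k) \<le> contraction * \<Delta> k"
      using descent_step_contracts[OF k iterate_in_level_set[OF k] True] by (simp add: contraction_def)
    then have "(\<Delta> (Suc k))\<^sup>2 \<le> contraction\<^sup>2 * (\<Delta> k)\<^sup>2"
      using pos by (metis power_mono power_mult_distrib less_imp_le)
    then have "(1 - contraction\<^sup>2) * (\<Delta> (Suc k))\<^sup>2
        \<le> (1 - contraction\<^sup>2) * (contraction\<^sup>2 * (\<Delta> k)\<^sup>2)"
      using one_minus_contraction_sq_bounds by (intro mult_left_mono) auto
    then have "1 / ((1 - contraction\<^sup>2) * (\<Delta> k)\<^sup>2)
        \<le> contraction\<^sup>2 / ((1 - contraction\<^sup>2) * (\<Delta> (Suc k))\<^sup>2)"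
      using one_minus_contraction_sq_bounds pos contraction_bounds by (simp add: field_simps)
    then have "inv_sq_descent_sum (Suc k) + 1 / (\<Delta> (Suc k))\<^sup>2
        \<le> contraction\<^sup>2 / ((1 - contraction\<^sup>2) * (\<Delta> (Suc k))\<^sup>2) + 1 / (\<Delta> (Suc k))\<^sup>2"
      using IH True by (simp add: inv_sq_descent_sum_Suc)
    also have "\<dots> = 1 / ((1 - contraction\<^sup>2) * (\<Delta> (Suc k))\<^sup>2)"
      using one_minus_contraction_sq_bounds pos by (simp add: field_simps)
    finally show ?thesis .
  next
    case False
    then show ?thesis using IH null_step_keeps_center pos by (simp add: inv_sq_descent_sum_Suc)
  qed
qed

lemma potential_le: "unsolved_upto k \<Longrightarrow> potential k \<le> null_coeff / (\<Delta> k)\<^sup>2"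
proof -
  assume k: "unsolved_upto k"
  then have G: "\<Delta> k / 2 \<le> prox_gap k" and D: "0 < \<Delta> k"
    using prox_gap_ge_half iterate_in_level_set by auto
  have "\<And>D G :: real. 0 < D \<Longrightarrow> D / 2 \<le> G \<Longrightarrow> C \<ge> 0 \<Longrightarrow> C / (2 * D * G) \<le> C / D\<^sup>2" for C
    by (intro divide_left_mono) (auto simp: power2_eq_square)
  from this[OF D G null_coeff_nonneg] show ?thesis unfolding potential_def .
qed

lemma potential_null_step:
  assumes "unsolved_upto (Suc k)" "\<not> descent k"
  shows "potential k + 1 \<le> potential (Suc k)"
proof -
  have k: "0 < \<Delta> k" "0 < prox_gap k" using assms(1) prox_gap_pos[of k] by auto
  have M: "0 < M" using M_pos assms(1) by simp
  have eq: "\<And>D G :: real. 0 < D \<Longrightarrow> 0 < G \<Longrightarrow>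
      null_coeff / (2 * D * G) + 1 = null_coeff / (2 * D) * (1 / G + (1 - \<beta>)\<^sup>2 * (D / D2) / (4 * M\<^sup>2))"
    using M beta D2_pos by (simp add: null_coeff_def field_simps)
  have "potential k + 1
      = null_coeff / (2 * \<Delta> k) * (1 / prox_gap k + (1 - \<beta>)\<^sup>2 * \<rho> k / (4 * M\<^sup>2))"
    unfolding potential_def using eq[OF k] by (simp only: rho_eq[of k])
  also have "\<dots> \<le> null_coeff / (2 * \<Delta> k) * (1 / prox_gap (Suc k))"
    using null_step_inverse_gap_increase[OF assms] null_coeff_nonneg k
    by (intro mult_left_mono) auto
  also have "\<dots> = potential (Suc k)"
    using null_step_keeps_center[OF k(1) assms(2)] by (simp add: potential_def)
  finally show ?thesis .
qed

lemma potential_nonneg: "unsolved_upto k \<Longrightarrow> 0 \<le> potential k"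
  unfolding potential_def using null_coeff_nonneg prox_gap_pos[of k]
  by (intro divide_nonneg_pos mult_pos_pos) simp_all

lemma n_null_le_potential:
  "unsolved_upto k \<Longrightarrow> real (n_null k) \<le> potential k + null_coeff * inv_sq_descent_sum k"
proof (induction k)
  case 0
  then show ?case using potential_nonneg by (simp add: n_null_def inv_sq_descent_sum_def)
next
  case (Suc k)
  then have k: "unsolved_upto k"
    and IH: "real (n_null k) \<le> potential k + null_coeff * inv_sq_descent_sum k" by simp_all
  show ?case
  proof (cases "descent k")
    case True
    then show ?thesis
      using IH potential_le[OF k] potential_nonneg[OF Suc.prems]
      by (simp add: n_null_Suc inv_sq_descent_sum_Suc algebra_simps)
  next
    case False
    then show ?thesis
      using IH potential_null_step[OF Suc.prems] by (simp add: n_null_Suc inv_sq_descent_sum_Suc)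
  qed
qed

lemma n_null_bound:
  assumes "unsolved_upto k"
  shows "real (n_null k) \<le> null_coeff / ((1 - contraction\<^sup>2) * (\<Delta> k)\<^sup>2)"
proof -
  have "real (n_null k) \<le> null_coeff * (inv_sq_descent_sum k + 1 / (\<Delta> k)\<^sup>2)"
    using n_null_le_potential[OF assms] potential_le[OF assms] by (simp add: algebra_simps)
  also have "\<dots> \<le> null_coeff * (1 / ((1 - contraction\<^sup>2) * (\<Delta> k)\<^sup>2))"
    using inv_sq_descent_sum_bound[OF assms] null_coeff_nonneg by (intro mult_left_mono)
  finally show ?thesis by simp
qed

lemma counts_while_above:
  assumes "0 < \<epsilon>" "\<forall>j\<le>k. \<epsilon> < \<Delta> j"
  shows "real (n_desc k) < 2 * ln (\<Delta> 0 / \<epsilon>) / \<beta>"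
    and "real (n_null k) \<le> null_coeff / ((1 - contraction\<^sup>2) * \<epsilon>\<^sup>2)"
proof -
  have k: "unsolved_upto k" using assms by (auto intro: less_trans)
  have "\<epsilon> < contraction ^ n_desc k * \<Delta> 0"
    using assms(2) \<Delta>_le_geometric[OF k] by (meson order_less_le_trans order_refl)
  then show "real (n_desc k) < 2 * ln (\<Delta> 0 / \<epsilon>) / \<beta>"
    using exponent_lt_of_geometric_gt[OF assms(1)] beta by (simp add: contraction_def)
  have "(1 - contraction\<^sup>2) * \<epsilon>\<^sup>2 \<le> (1 - contraction\<^sup>2) * (\<Delta> k)\<^sup>2"
    using assms one_minus_contraction_sq_bounds by (intro mult_left_mono power_mono) auto
  then have "null_coeff / ((1 - contraction\<^sup>2) * (\<Delta> k)\<^sup>2) \<le> null_coeff / ((1 - contraction\<^sup>2) * \<epsilon>\<^sup>2)"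
    using assms one_minus_contraction_sq_bounds null_coeff_nonneg by (intro divide_left_mono) auto
  then show "real (n_null k) \<le> null_coeff / ((1 - contraction\<^sup>2) * \<epsilon>\<^sup>2)"
    using n_null_bound[OF k] by linarith
qed

lemma eventually_within_eps:
  assumes "0 < \<epsilon>"
  shows "\<exists>k. \<Delta> k \<le> \<epsilon>"
proof (rule ccontr)
  assume "\<nexists>k. \<Delta> k \<le> \<epsilon>"
  then have above: "\<forall>j\<le>k. \<epsilon> < \<Delta> j" for k by (simp add: not_le)
  define L where "L = 2 * ln (\<Delta> 0 / \<epsilon>) / \<beta>"
  define N where "N = null_coeff / ((1 - contraction\<^sup>2) * \<epsilon>\<^sup>2)"
  define k where "k = nat \<lceil>L\<rceil> + nat \<lceil>N\<rceil> + 1"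
  have "real k = real (n_desc k) + real (n_null k)"
    using card_Collect_less_split[of k descent] unfolding n_desc_def n_null_def
    by (metis of_nat_add)
  also have "\<dots> < L + N + 1"
    using counts_while_above[OF assms above[of k]] unfolding L_def N_def by linarith
  also have "\<dots> \<le> real k"
    unfolding k_def using real_nat_ceiling_ge[of L] real_nat_ceiling_ge[of N] by simp
  finally show False by simp
qed

lemma first_eps_solution_counts:
  assumes "0 < \<epsilon>" "\<epsilon> \<le> \<Delta> 0"
  defines "K \<equiv> LEAST k. \<Delta> k \<le> \<epsilon>"
  shows "\<Delta> K \<le> \<epsilon>" "\<forall>j<K. \<epsilon> < \<Delta> j"
    and "real (n_desc K) \<le> real_of_int \<lceil>2 * ln (\<Delta> 0 / \<epsilon>) / \<beta>\<rceil>"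
    and "real (n_null K) \<le> null_coeff / ((1 - contraction\<^sup>2) * \<epsilon>\<^sup>2)"
proof -
  show K: "\<Delta> K \<le> \<epsilon>"
    unfolding K_def using eventually_within_eps[OF assms(1)] by (rule LeastI_ex)
  show before: "\<forall>j<K. \<epsilon> < \<Delta> j"
    unfolding K_def using not_less_Least by force
  have "real (n_desc K) \<le> real_of_int \<lceil>2 * ln (\<Delta> 0 / \<epsilon>) / \<beta>\<rceil>
      \<and> real (n_null K) \<le> null_coeff / ((1 - contraction\<^sup>2) * \<epsilon>\<^sup>2)"
  proof (cases K)
    case 0
    have "0 \<le> 2 * ln (\<Delta> 0 / \<epsilon>) / \<beta>" using assms(1,2) beta by simp
    moreover have "0 \<le> null_coeff / ((1 - contraction\<^sup>2) * \<epsilon>\<^sup>2)"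
      using null_coeff_nonneg one_minus_contraction_sq_bounds by simp
    ultimately show ?thesis using 0 by (simp add: n_desc_def n_null_def)
  next
    case (Suc m)
    then have above: "\<forall>j\<le>m. \<epsilon> < \<Delta> j" using before by simp
    \<comment> \<open>A null step keeps the center, so the step that reaches accuracy \<open>\<epsilon>\<close> is a descent step.\<close>
    have "descent m"
      using null_step_keeps_center(1)[of m] above K Suc assms(1) by fastforce
    have "int (n_desc m) < \<lceil>2 * ln (\<Delta> 0 / \<epsilon>) / \<beta>\<rceil>"
      using counts_while_above(1)[OF assms(1) above] by (simp add: less_ceiling_iff)
    then show ?thesis
      using counts_while_above(2)[OF assms(1) above] Suc \<open>descent m\<close>
      by (simp add: n_desc_Suc n_null_Suc)
  qed
  then show "real (n_desc K) \<le> real_of_int \<lceil>2 * ln (\<Delta> 0 / \<epsilon>) / \<beta>\<rceil>"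
    and "real (n_null K) \<le> null_coeff / ((1 - contraction\<^sup>2) * \<epsilon>\<^sup>2)" by auto
qed

end

theorem theorem5:
  fixes f :: "'a::euclidean_space \<Rightarrow> real"
    and g :: "'a \<Rightarrow> 'a"
    and M \<beta> D2 \<epsilon> :: real
    and x z :: "nat \<Rightarrow> 'a"
    and fm :: "nat \<Rightarrow> 'a \<Rightarrow> real"
    and \<rho> :: "nat \<Rightarrow> real"
  assumes convex: "convex_on UNIV f"
    and lipschitz: "M-lipschitz_on UNIV f"
    and Xstar_nonempty: "Xstar f \<noteq> {}"
    and subgrad_oracle: "\<forall>y. is_subgradient f y (g y)"
    and beta: "0 < \<beta>" "\<beta> < 1"
    and D2_pos: "D2 > 0"
    and D2_bound: "\<forall>y. f y \<le> f (x 0) \<longrightarrow> (infdist y (Xstar f))\<^sup>2 \<le> D2"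
    and init_z: "z 0 = x 0"
    and init_model: "fm 0 = (\<lambda>w. f (x 0) + inner (g (x 0)) (w - x 0))"
    and stepsize: "\<forall>k. \<rho> k = (f (x k) - fstar f) / D2"
    and run: "\<forall>k. f (x k) > fstar f \<longrightarrow> pbm_step f g \<beta> x z fm \<rho> k"
    and eps: "0 < \<epsilon>" "\<epsilon> \<le> f (x 0) - fstar f"
  shows "\<exists>K. f (x K) - fstar f \<le> \<epsilon> \<and> (\<forall>j<K. f (x j) - fstar f > \<epsilon>) \<and>
     real (card {k. k < K \<and> pbm_descent f \<beta> x z fm k})
       \<le> real_of_int \<lceil>2 * ln ((f (x 0) - fstar f) / \<epsilon>) / \<beta>\<rceil> \<and>
     real (card {k. k < K \<and> \<not> pbm_descent f \<beta> x z fm k})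
       \<le> (1 / (1 - (1 - \<beta> / 2)\<^sup>2)) * (8 * M\<^sup>2 * D2 / ((1 - \<beta>)\<^sup>2 * \<epsilon>\<^sup>2))"
proof -
  interpret pbm_run f g M \<beta> D2 x z fm \<rho>
    using lipschitz Xstar_nonempty subgrad_oracle beta D2_pos D2_bound init_model stepsize run
    by unfold_locales
  have "null_coeff / ((1 - contraction\<^sup>2) * \<epsilon>\<^sup>2)
      = (1 / (1 - (1 - \<beta> / 2)\<^sup>2)) * (8 * M\<^sup>2 * D2 / ((1 - \<beta>)\<^sup>2 * \<epsilon>\<^sup>2))"
    by (simp add: null_coeff_def contraction_def)
  then show ?thesis
    using first_eps_solution_counts[OF eps] unfolding n_desc_def n_null_def by auto
qed

end
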